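(* The set of finite factors of $\mathbf{t}_{3/2}$ and the set of finite factors of $\mathbf{t}'$ are each closed under reversal: if $u\in\{0,1\}^*$ is a factor of one of these words, then so is its reversal $u^R$.
   Context: Base-$3/2$ expansions: $\langle 0\rangle_{3/2}$ is the empty word, and for $n\ge 1$, writing $2n=3m+d$ with integers $m\ge0$, $d\in\{0,1,2\}$, set $\langle n\rangle_{3/2}=\langle m\rangle_{3/2}\,d$. The Thue--Morse word in base $3/2$ is $\mathbf{t}_{3/2}=(t_n)_{n\ge0}\in\{0,1\}^{\mathbb{N}}$ where $t_n$ is the digit sum of $\langle n\rangle_{3/2}$ modulo $2$; equivalently the unique binary sequence with $t_0=0$, $t_{3n}=t_{3n+1}=t_{2n}$, $t_{3n+2}=1-t_{2n+1}$. Dekking's word $\mathbf{t}'=(x_n)_{n\ge0}$ is the unique binary infinite word with $x_0=0$ such that $\mathbf{t}'=\beta(x_0x_1)\beta(x_2x_3)\cdots$ where $\beta(00)=\beta(01)=010$, $\beta(10)=\beta(11)=101$. The reversal of $a_1\cdots a_n$ is $a_n\cdots a_1$. *)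

theory Defs
  imports Main
begin

function base32 :: "nat \<Rightarrow> nat list" where
  "base32 n = (if n = 0 then [] else base32 ((2 * n) div 3) @ [(2 * n) mod 3])"
  by pat_completeness auto
termination
  by (relation "measure id") auto

declare base32.simps[simp del]

definition tm32 :: "nat \<Rightarrow> nat" where
  "tm32 n = sum_list (base32 n) mod 2"

text \<open>Dekking's morphism on length-2 blocks: beta(00)=beta(01)=010, beta(10)=beta(11)=101.\<close>
definition beta :: "nat \<Rightarrow> nat \<Rightarrow> nat list" where
  "beta a b = (if a = 0 then [0, 1, 0] else [1, 0, 1])"

text \<open>Dekking's word: the unique binary word x with x_0 = 0 and
  x = beta(x_0 x_1) beta(x_2 x_3) ...; position n of the concatenation lies in the
  block number n div 3, at offset n mod 3.\<close>
definition dekking :: "nat \<Rightarrow> nat" where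
  "dekking = (THE x. (\<forall>n. x n \<in> {0, 1}) \<and> x 0 = 0 \<and>
      (\<forall>n. x n = beta (x (2 * (n div 3))) (x (2 * (n div 3) + 1)) ! (n mod 3)))"

definition factor_of :: "nat list \<Rightarrow> (nat \<Rightarrow> nat) \<Rightarrow> bool" where
  "factor_of u w \<longleftrightarrow> (\<exists>i. u = map w [i..<i + length u])"

end

(*
  Call c a mirror point of the infinite word w for a prefix length M if c >= M and
  w (c - n) = w n for all n <= M.  If every M has one, the reversal of a factor
  w[i..<i+L] reappears as w[c+1-i-L..<c+1-i], so factors are closed under reversal.

  For t_{3/2}: if n ends in j base-3/2 digits after the prefix x, and x + x' + 2 = 2^j y,
  then 3^j y - 2 - n ends in the complementary digits 2 - d (same parity) after the
  prefix x'.  Taking j so large that every n <= M has empty prefix, and y with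
  t_{3/2} (2^j y - 2) = 0, makes 3^j y - 2 a mirror point.  Dekking's word is t_{3/2}
  with every letter a replaced by the palindrome a (1-a) a, so c |-> 3c + 2 carries
  its mirror points over.
*)
theory Submission
  imports Defs "HOL-Number_Theory.Cong"
begin

definition has_mirror_points :: "(nat \<Rightarrow> 'a) \<Rightarrow> bool" where
  "has_mirror_points w \<longleftrightarrow> (\<forall>M. \<exists>c\<ge>M. \<forall>n\<le>M. w (c - n) = w n)"

lemma factor_of_rev:
  assumes "has_mirror_points w" and "factor_of u w"
  shows "factor_of (rev u) w"
proof -
  obtain i where u: "u = map w [i..<i + length u]"
    using assms(2) unfolding factor_of_def by blast
  obtain c where c: "c \<ge> i + length u" "\<forall>n\<le>i + length u. w (c - n) = w n"
    using assms(1) unfolding has_mirror_points_def by blast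
  define L where "L = length u"
  have "rev u = map w [Suc c - (i + L)..<Suc c - (i + L) + length (rev u)]"
  proof (rule nth_equalityI)
    fix k
    assume k: "k < length (rev u)"
    then have "rev u ! k = w (i + (L - Suc k))"
      by (subst u) (simp add: rev_nth L_def)
    also have "\<dots> = w (c - (i + (L - Suc k)))"
      by (rule c(2)[rule_format, symmetric]) (simp add: L_def)
    also have "c - (i + (L - Suc k)) = Suc c - (i + L) + k"
      using c(1) k by (simp add: L_def)
    finally show "rev u ! k = map w [Suc c - (i + L)..<Suc c - (i + L) + length (rev u)] ! k"
      using k by simp
  qed simp
  then show ?thesis
    unfolding factor_of_def by blast
qed

lemma has_mirror_points_block_subst:
  assumes "has_mirror_points w" and "0 < b" and "\<And>a r. r < b \<Longrightarrow> f a (b - 1 - r) = f a r"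
  shows "has_mirror_points (\<lambda>n. f (w (n div b)) (n mod b))"
  unfolding has_mirror_points_def
proof
  fix M
  obtain c where c: "M div b \<le> c" "\<forall>k\<le>M div b. w (c - k) = w k"
    using assms(1) unfolding has_mirror_points_def by blast
  show "\<exists>c'\<ge>M. \<forall>n\<le>M. f (w ((c' - n) div b)) ((c' - n) mod b) = f (w (n div b)) (n mod b)"
  proof (intro exI[of _ "b * c + (b - 1)"] conjI allI impI)
    have "M = b * (M div b) + M mod b" "M mod b < b" "b * (M div b) \<le> b * c"
      using assms(2) c(1) by simp_all
    then show "M \<le> b * c + (b - 1)"
      by linarith
    fix n
    assume "n \<le> M"
    define k r where "k = n div b" and "r = n mod b"
    have "k \<le> M div b"
      unfolding k_def using \<open>n \<le> M\<close> by (rule div_le_mono)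
    then have "b * k \<le> b * c" "b * (c - k) = b * c - b * k"
      using c(1) by (simp_all add: diff_mult_distrib2)
    moreover have "n = b * k + r" "r < b"
      unfolding k_def r_def using assms(2) by simp_all
    ultimately have "b * c + (b - 1) - n = b * (c - k) + (b - 1 - r)"
      by linarith
    then have "(b * c + (b - 1) - n) div b = c - k" "(b * c + (b - 1) - n) mod b = b - 1 - r"
      using assms(2) by simp_all
    then show "f (w ((b * c + (b - 1) - n) div b)) ((b * c + (b - 1) - n) mod b) = f (w (n div b)) (n mod b)"
      using c(2) \<open>k \<le> M div b\<close> assms(3) \<open>r < b\<close> unfolding k_def r_def by simp
  qed
qed

lemma mod2_add_2_minus: "d < 3 \<Longrightarrow> (a + (2 - d)) mod 2 = (a + d) mod 2"
  for a d :: nat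
  by (auto simp: less_Suc_eq numeral_3_eq_3)

definition drop_digit :: "nat \<Rightarrow> nat" where
  "drop_digit n = 2 * n div 3"

lemma tm32_0 [simp]: "tm32 0 = 0"
  by (simp add: tm32_def base32.simps)

lemma tm32_less_2 [simp]: "tm32 n < 2"
  by (simp add: tm32_def)

lemma tm32_rec: "tm32 n = (tm32 (drop_digit n) + 2 * n mod 3) mod 2"
  by (cases "n = 0") (simp_all add: tm32_def drop_digit_def base32.simps[of n] mod_add_left_eq)

lemma tm32_2: "tm32 2 = 1"
proof -
  have "tm32 1 = 0"
    using tm32_rec[of 1] by (simp add: drop_digit_def)
  then show ?thesis
    using tm32_rec[of 2] by (simp add: drop_digit_def)
qed

lemma drop_digit_iter_eventually_0: "\<exists>j. (drop_digit ^^ j) n = 0"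
proof (induction n rule: less_induct)
  case (less n)
  show ?case
  proof (cases "n = 0")
    case True
    then have "(drop_digit ^^ 0) n = 0"
      by simp
    then show ?thesis ..
  next
    case False
    then have "drop_digit n < n"
      by (simp add: drop_digit_def)
    then obtain j where "(drop_digit ^^ j) (drop_digit n) = 0"
      using less by blast
    then have "(drop_digit ^^ Suc j) n = 0"
      by (simp only: funpow_Suc_right comp_apply)
    then show ?thesis ..
  qed
qed

lemma drop_digit_iter_mono: "n \<le> m \<Longrightarrow> (drop_digit ^^ j) n \<le> (drop_digit ^^ j) m"
  by (induction j) (auto simp: drop_digit_def div_le_mono)

text \<open>Passing from \<open>n\<close> to \<open>n'\<close> replaces each of the last \<open>j\<close> base-3/2 digits \<open>d\<close>
  of \<open>n\<close> by \<open>2 - d\<close>, which has the same parity, and the remaining prefix \<open>x\<close> by \<open>x'\<close>.\<close>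

lemma tm32_reflection:
  assumes "(drop_digit ^^ j) n = x" and "x + x' + 2 = 2 ^ j * y"
  shows "\<exists>n'. n + n' + 2 = 3 ^ j * y \<and> (drop_digit ^^ j) n' = x' \<and>
           tm32 n' = (tm32 n + tm32 x + tm32 x') mod 2"
  using assms
proof (induction j arbitrary: n y)
  case 0
  have "tm32 x' = (tm32 x + tm32 x + tm32 x') mod 2"
    using tm32_less_2[of x'] by presburger
  with 0 show ?case
    by auto
next
  case (Suc j)
  define A where "A = 3 ^ j * y"
  define d where "d = 2 * n mod 3"
  have digits: "2 * n = 3 * drop_digit n + d" "d < 3"
    by (simp_all add: drop_digit_def d_def)
  have "(drop_digit ^^ j) (drop_digit n) = x"
    using Suc.prems(1) by (simp only: funpow_Suc_right comp_apply)
  moreover have "x + x' + 2 = 2 ^ j * (2 * y)"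
    using Suc.prems(2) by simp
  ultimately obtain m' where m': "drop_digit n + m' + 2 = 2 * A" "(drop_digit ^^ j) m' = x'"
      "tm32 m' = (tm32 (drop_digit n) + tm32 x + tm32 x') mod 2"
    using Suc.IH by (fastforce simp: A_def mult.left_commute)
  define n' where "n' = 3 * A - n - 2"
  have sum: "n + n' + 2 = 3 * A"
    using m'(1) digits unfolding n'_def by linarith
  have "2 * n' = 3 * m' + (2 - d)"
    using m'(1) digits sum by linarith
  then have drop_n': "drop_digit n' = m'" and digit_n': "2 * n' mod 3 = 2 - d"
    by (simp_all add: drop_digit_def)
  have "tm32 n' = (tm32 m' + (2 - d)) mod 2"
    using tm32_rec[of n'] unfolding drop_n' digit_n' .
  also have "\<dots> = (tm32 m' + d) mod 2"
    using digits(2) by (rule mod2_add_2_minus)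
  also have "\<dots> = (tm32 (drop_digit n) + d + tm32 x + tm32 x') mod 2"
    unfolding m'(3) by (simp add: mod_add_left_eq mod_add_right_eq ac_simps)
  also have "\<dots> = ((tm32 (drop_digit n) + d) mod 2 + tm32 x + tm32 x') mod 2"
    by (simp add: mod_add_left_eq add.assoc)
  also have "\<dots> = (tm32 n + tm32 x + tm32 x') mod 2"
    unfolding d_def by (simp only: tm32_rec[of n, symmetric])
  finally have "tm32 n' = (tm32 n + tm32 x + tm32 x') mod 2" .
  moreover have "(drop_digit ^^ Suc j) n' = x'"
    using m'(2) drop_n' by (simp only: funpow_Suc_right comp_apply)
  ultimately show ?case
    using sum by (intro exI[of _ n']) (simp add: A_def)
qed

lemma ex_tm32_eq_0_pow2_dvd_plus_2:
  assumes "(drop_digit ^^ j) 2 = 0"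
  shows "\<exists>m. 2 ^ j dvd m + 2 \<and> tm32 m = 0"
proof -
  have "coprime ((3::nat) ^ j) (2 ^ j)"
    by simp
  then obtain z :: nat where z: "[3 ^ j * z = 1] (mod 2 ^ j)"
    by (metis cong_solve_coprime_nat One_nat_def)
  \<comment> \<open>\<open>y\<close> is chosen so that the reflection \<open>3 ^ j * y - 4\<close> of \<open>2\<close> is again \<open>-2\<close> modulo \<open>2 ^ j\<close>\<close>
  define y where "y = 2 * (z + 2 ^ j)"
  have "[2 * (3 ^ j * z) + 2 ^ j * (2 * 3 ^ j) = 2 * 1 + 0] (mod 2 ^ j)"
    using z by (intro cong_add cong_scalar_left cong_mult_self_left)
  then have y_cong: "[3 ^ j * y = 2] (mod 2 ^ j)"
    by (simp add: y_def algebra_simps numeral_2_eq_2)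
  define m where "m = 2 ^ j * y - 2"
  have "1 \<le> z + (2::nat) ^ j"
    by (simp add: Suc_le_eq)
  then have "2 \<le> y"
    by (simp add: y_def)
  moreover have "y \<le> 2 ^ j * y"
    by simp
  ultimately have m: "0 + m + 2 = 2 ^ j * y"
    unfolding m_def by linarith
  show ?thesis
  proof (cases "tm32 m = 0")
    case True
    moreover have "2 ^ j dvd m + 2"
      using m by simp
    ultimately show ?thesis
      by blast
  next
    case False
    then have "tm32 m = 1"
      using tm32_less_2[of m] by linarith
    obtain n' where n': "2 + n' + 2 = 3 ^ j * y" "tm32 n' = (tm32 2 + tm32 0 + tm32 m) mod 2"
      using tm32_reflection[OF assms m] by blast
    have "2 ^ j dvd 3 ^ j * y - 2"
      using y_cong n'(1) by (simp add: cong_altdef_nat)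
    moreover have "3 ^ j * y - 2 = n' + 2"
      using n'(1) by linarith
    ultimately have "2 ^ j dvd n' + 2"
      by simp
    moreover have "tm32 n' = 0"
      using n'(2) \<open>tm32 m = 1\<close> tm32_2 by simp
    ultimately show ?thesis
      by blast
  qed
qed

lemma has_mirror_points_tm32: "has_mirror_points tm32"
  unfolding has_mirror_points_def
proof
  fix M
  obtain j where "(drop_digit ^^ j) (M + 2) = 0"
    using drop_digit_iter_eventually_0 by blast
  then have below: "(drop_digit ^^ j) n = 0" if "n \<le> M + 2" for n
    using drop_digit_iter_mono[OF that, of j] by simp
  obtain m where "2 ^ j dvd m + 2" "tm32 m = 0"
    using ex_tm32_eq_0_pow2_dvd_plus_2[OF below[of 2]] by auto
  then obtain y where y: "0 + m + 2 = 2 ^ j * y"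
    by auto
  have reflect: "\<exists>n'. n + n' + 2 = 3 ^ j * y \<and> tm32 n' = tm32 n" if "n \<le> M" for n
    using tm32_reflection[OF below y, of n] that \<open>tm32 m = 0\<close> tm32_less_2[of n] by auto
  show "\<exists>c\<ge>M. \<forall>n\<le>M. tm32 (c - n) = tm32 n"
  proof (intro exI[of _ "3 ^ j * y - 2"] conjI allI impI)
    show "M \<le> 3 ^ j * y - 2"
      using reflect[of M] by auto
    fix n
    assume "n \<le> M"
    then obtain n' where n': "n + n' + 2 = 3 ^ j * y" "tm32 n' = tm32 n"
      using reflect by blast
    then have "3 ^ j * y - 2 - n = n'"
      by linarith
    with n'(2) show "tm32 (3 ^ j * y - 2 - n) = tm32 n"
      by simp
  qed
qed

lemma beta_fixpoint_unique:
  assumes "x 0 = x' 0"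
    and "\<And>n. x n = beta (x (2 * (n div 3))) (x (2 * (n div 3) + 1)) ! (n mod 3)"
    and "\<And>n. x' n = beta (x' (2 * (n div 3))) (x' (2 * (n div 3) + 1)) ! (n mod 3)"
  shows "x = x'"
proof
  fix n
  show "x n = x' n"
  proof (induction n rule: less_induct)
    case (less n)
    show ?case
    proof (cases "n = 0")
      case False
      then have "x (2 * (n div 3)) = x' (2 * (n div 3))"
        using less by simp
      then show ?thesis
        using assms(2,3)[of n] by (simp add: beta_def)
    qed (use assms(1) in simp)
  qed
qed

lemma dekking_eq: "dekking = (\<lambda>n. (tm32 (n div 3) + n mod 3) mod 2)"
proof -
  define X where "X = (\<lambda>n. (tm32 (n div 3) + n mod 3) mod 2)"
  have X_beta: "X n = beta (X (2 * (n div 3))) (X (2 * (n div 3) + 1)) ! (n mod 3)" for n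
  proof -
    have "X (2 * (n div 3)) = tm32 (n div 3)"
      using tm32_rec[of "n div 3"] by (simp add: X_def drop_digit_def)
    moreover have "tm32 (n div 3) = 0 \<or> tm32 (n div 3) = 1"
      using tm32_less_2[of "n div 3"] by linarith
    moreover have "n mod 3 = 0 \<or> n mod 3 = 1 \<or> n mod 3 = 2"
      by linarith
    ultimately show ?thesis
      by (auto simp: X_def beta_def)
  qed
  have "(\<forall>n. X n \<in> {0, 1}) \<and> X 0 = 0 \<and>
      (\<forall>n. X n = beta (X (2 * (n div 3))) (X (2 * (n div 3) + 1)) ! (n mod 3))"
  proof (intro conjI allI)
    show "X n \<in> {0, 1}" for n
      unfolding X_def by auto
    show "X 0 = 0"
      by (simp add: X_def)
  qed (rule X_beta)
  moreover have "x = X" if "(\<forall>n. x n \<in> {0, 1}) \<and> x 0 = 0 \<and>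
      (\<forall>n. x n = beta (x (2 * (n div 3))) (x (2 * (n div 3) + 1)) ! (n mod 3))" for x
  proof (rule beta_fixpoint_unique)
    have "x 0 = 0"
      using that by blast
    then show "x 0 = X 0"
      by (simp add: X_def)
    show "x n = beta (x (2 * (n div 3))) (x (2 * (n div 3) + 1)) ! (n mod 3)" for n
      using that by blast
  qed (rule X_beta)
  ultimately have "dekking = X"
    unfolding dekking_def by (rule the_equality)
  then show ?thesis
    unfolding X_def .
qed

lemma has_mirror_points_dekking: "has_mirror_points dekking"
proof -
  have "(a + (3 - 1 - r)) mod 2 = (a + r) mod 2" if "r < 3" for a r :: nat
    using mod2_add_2_minus[OF that] by simp
  then have "has_mirror_points (\<lambda>n. (tm32 (n div 3) + n mod 3) mod 2)"
    using has_mirror_points_block_subst[OF has_mirror_points_tm32, of 3 "\<lambda>a r. (a + r) mod 2"]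
    by simp
  then show ?thesis
    unfolding dekking_eq .
qed

theorem proposition17:
  shows "(\<forall>u. factor_of u tm32 \<longrightarrow> factor_of (rev u) tm32) \<and>
         (\<forall>u. factor_of u dekking \<longrightarrow> factor_of (rev u) dekking)"
  using factor_of_rev has_mirror_points_tm32 has_mirror_points_dekking by blast

end
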